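(* Let $G\in\mathcal{C}$, let $H$ be a hole of $G$, and let $u,v\in V(G)\setminus V(H)$ cross with respect to $H$. Then one of the following holds: (i) $H$ contains four distinct vertices $u',v',u'',v''$, appearing in this order along $H$, with $u',u''\in N_H(u)$ and $v',v''\in N_H(v)$; (ii) $N_H(u)=N_H(v)$, $N_H(u)$ is an independent set of size $3$, and $uv\in E(G)$; (iii) $N_H(u)=N_H(v)$, both $u$ and $v$ are clones in $H$ (of the same vertex), and $uv\in E(G)$.
   Context: All graphs are finite and simple; paths are induced paths; a hole is an induced cycle of length at least four. $\mathcal{C}$ is the class of graphs containing no theta, pyramid, prism or turtle as an induced subgraph, where: a theta consists of two nonadjacent vertices $a,b$ and three paths from $a$ to $b$, otherwise vertex-disjoint, any two of which induce a hole; a pyramid consists of a vertex $a$, a triangle $\{b_1,b_2,b_3\}$ and paths $P_i$ from $a$ to $b_i$, pairwise disjoint except at $a$, any two of which induce a hole; a prism consists of two disjoint triangles $\{a_1,a_2,a_3\},\{b_1,b_2,b_3\}$ and pairwise disjoint paths $P_i$ from $a_i$ to $b_i$, any two of which induce a hole; a turtle consists of disjoint paths $P_1$ (from $a_1$ to $b_1$), $P_2$ (from $a_2$ to $b_2$) with $a_1a_2,b_1b_2$ edges and $V(P_1)\cup V(P_2)$ inducing a hole, plus adjacent vertices $x,y$ where $x$ has at least three neighbors in $P_1$ and none in $P_2$, and $y$ has at least three neighbors in $P_2$ and none in $P_1$. For a hole $H$ and $u\notin V(H)$, $N_H(u)$ is the set of neighbors of $u$ in $H$. A vertex $u\notin V(H)$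 is a clone of $y\in V(H)$ if $N_H(u)=\{x,y,z\}$ where $x\text{-}y\text{-}z$ is a subpath of $H$. Two vertices $u,v\notin V(H)$ are nested with respect to $H$ if there exist distinct $a,b\in V(H)$ such that one of the two $a$–$b$ paths of $H$ contains all neighbors of $u$ in $H$ and the other contains all neighbors of $v$ in $H$; they cross if they are not nested. *)

theory Defs
  imports Main
begin

definition graph :: "'a set \<Rightarrow> ('a \<Rightarrow> 'a \<Rightarrow> bool) \<Rightarrow> bool" where
  "graph V E \<longleftrightarrow> finite V \<and> (\<forall>x y. E x y \<longrightarrow> x \<in> V \<and> y \<in> V)
     \<and> (\<forall>x y. E x y \<longrightarrow> E y x) \<and> (\<forall>x. \<not> E x x)"

definition ipath :: "('a \<Rightarrow> 'a \<Rightarrow> bool) \<Rightarrow> 'a list \<Rightarrow> bool" where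
  "ipath E xs \<longleftrightarrow> xs \<noteq> [] \<and> distinct xs \<and>
     (\<forall>i j. i < length xs \<longrightarrow> j < length xs \<longrightarrow> (E (xs!i) (xs!j) \<longleftrightarrow> (i + 1 = j \<or> j + 1 = i)))"

definition path_from_to :: "'a set \<Rightarrow> ('a \<Rightarrow> 'a \<Rightarrow> bool) \<Rightarrow> 'a list \<Rightarrow> 'a \<Rightarrow> 'a \<Rightarrow> bool" where
  "path_from_to V E P a b \<longleftrightarrow> set P \<subseteq> V \<and> ipath E P \<and> hd P = a \<and> last P = b"

definition hole :: "('a \<Rightarrow> 'a \<Rightarrow> bool) \<Rightarrow> 'a list \<Rightarrow> bool" where
  "hole E xs \<longleftrightarrow> length xs \<ge> 4 \<and> distinct xs \<and>
     (\<forall>i j. i < length xs \<longrightarrow> j < length xs \<longrightarrow>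
        (E (xs!i) (xs!j) \<longleftrightarrow> (j = Suc i mod length xs \<or> i = Suc j mod length xs)))"

definition is_hole :: "'a set \<Rightarrow> ('a \<Rightarrow> 'a \<Rightarrow> bool) \<Rightarrow> 'a list \<Rightarrow> bool" where
  "is_hole V E H \<longleftrightarrow> set H \<subseteq> V \<and> hole E H"

definition induces_hole :: "('a \<Rightarrow> 'a \<Rightarrow> bool) \<Rightarrow> 'a set \<Rightarrow> bool" where
  "induces_hole E S \<longleftrightarrow> (\<exists>xs. set xs = S \<and> hole E xs)"

definition has_theta :: "'a set \<Rightarrow> ('a \<Rightarrow> 'a \<Rightarrow> bool) \<Rightarrow> bool" where
  "has_theta V E \<longleftrightarrow> (\<exists>a b P1 P2 P3. a \<noteq> b \<and> \<not> E a b \<and>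
     path_from_to V E P1 a b \<and> path_from_to V E P2 a b \<and> path_from_to V E P3 a b \<and>
     set P1 \<inter> set P2 = {a, b} \<and> set P1 \<inter> set P3 = {a, b} \<and> set P2 \<inter> set P3 = {a, b} \<and>
     induces_hole E (set P1 \<union> set P2) \<and> induces_hole E (set P1 \<union> set P3) \<and>
     induces_hole E (set P2 \<union> set P3))"

definition triangle :: "('a \<Rightarrow> 'a \<Rightarrow> bool) \<Rightarrow> 'a \<Rightarrow> 'a \<Rightarrow> 'a \<Rightarrow> bool" where
  "triangle E x y z \<longleftrightarrow> x \<noteq> y \<and> y \<noteq> z \<and> x \<noteq> z \<and> E x y \<and> E y z \<and> E x z"

definition has_pyramid :: "'a set \<Rightarrow> ('a \<Rightarrow> 'a \<Rightarrow> bool) \<Rightarrow> bool" where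
  "has_pyramid V E \<longleftrightarrow> (\<exists>a b1 b2 b3 P1 P2 P3. triangle E b1 b2 b3 \<and>
     path_from_to V E P1 a b1 \<and> path_from_to V E P2 a b2 \<and> path_from_to V E P3 a b3 \<and>
     set P1 \<inter> set P2 = {a} \<and> set P1 \<inter> set P3 = {a} \<and> set P2 \<inter> set P3 = {a} \<and>
     induces_hole E (set P1 \<union> set P2) \<and> induces_hole E (set P1 \<union> set P3) \<and>
     induces_hole E (set P2 \<union> set P3))"

definition has_prism :: "'a set \<Rightarrow> ('a \<Rightarrow> 'a \<Rightarrow> bool) \<Rightarrow> bool" where
  "has_prism V E \<longleftrightarrow> (\<exists>a1 a2 a3 b1 b2 b3 P1 P2 P3. triangle E a1 a2 a3 \<and> triangle E b1 b2 b3 \<and>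
     {a1, a2, a3} \<inter> {b1, b2, b3} = {} \<and>
     path_from_to V E P1 a1 b1 \<and> path_from_to V E P2 a2 b2 \<and> path_from_to V E P3 a3 b3 \<and>
     set P1 \<inter> set P2 = {} \<and> set P1 \<inter> set P3 = {} \<and> set P2 \<inter> set P3 = {} \<and>
     induces_hole E (set P1 \<union> set P2) \<and> induces_hole E (set P1 \<union> set P3) \<and>
     induces_hole E (set P2 \<union> set P3))"

definition has_turtle :: "'a set \<Rightarrow> ('a \<Rightarrow> 'a \<Rightarrow> bool) \<Rightarrow> bool" where
  "has_turtle V E \<longleftrightarrow> (\<exists>a1 b1 a2 b2 P1 P2 x y.
     path_from_to V E P1 a1 b1 \<and> path_from_to V E P2 a2 b2 \<and> set P1 \<inter> set P2 = {} \<and>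
     E a1 a2 \<and> E b1 b2 \<and> induces_hole E (set P1 \<union> set P2) \<and>
     x \<in> V \<and> y \<in> V \<and> x \<notin> set P1 \<union> set P2 \<and> y \<notin> set P1 \<union> set P2 \<and> E x y \<and>
     card {z \<in> set P1. E x z} \<ge> 3 \<and> {z \<in> set P2. E x z} = {} \<and>
     card {z \<in> set P2. E y z} \<ge> 3 \<and> {z \<in> set P1. E y z} = {})"

definition in_C :: "'a set \<Rightarrow> ('a \<Rightarrow> 'a \<Rightarrow> bool) \<Rightarrow> bool" where
  "in_C V E \<longleftrightarrow> graph V E \<and> \<not> has_theta V E \<and> \<not> has_pyramid V E \<and>
     \<not> has_prism V E \<and> \<not> has_turtle V E"

definition nbrs_in :: "('a \<Rightarrow> 'a \<Rightarrow> bool) \<Rightarrow> 'a list \<Rightarrow> 'a \<Rightarrow> 'a set" where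
  "nbrs_in E H u = {x \<in> set H. E u x}"

definition clone_of :: "('a \<Rightarrow> 'a \<Rightarrow> bool) \<Rightarrow> 'a list \<Rightarrow> 'a \<Rightarrow> 'a \<Rightarrow> bool" where
  "clone_of E H u y \<longleftrightarrow> u \<notin> set H \<and> (\<exists>i < length H. y = H ! i \<and>
     nbrs_in E H u = {H ! ((i + length H - 1) mod length H), H ! i, H ! (Suc i mod length H)})"

text \<open>Vertex set of the path of H going forward from position i to position j.\<close>
definition arc :: "'a list \<Rightarrow> nat \<Rightarrow> nat \<Rightarrow> 'a set" where
  "arc H i j = {H ! ((i + k) mod length H) | k. k \<le> (j + length H - i) mod length H}"

definition nested :: "('a \<Rightarrow> 'a \<Rightarrow> bool) \<Rightarrow> 'a list \<Rightarrow> 'a \<Rightarrow> 'a \<Rightarrow> bool" where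
  "nested E H u v \<longleftrightarrow> u \<notin> set H \<and> v \<notin> set H \<and>
     (\<exists>i j. i < length H \<and> j < length H \<and> i \<noteq> j \<and>
        nbrs_in E H u \<subseteq> arc H i j \<and> nbrs_in E H v \<subseteq> arc H j i)"

definition cross :: "('a \<Rightarrow> 'a \<Rightarrow> bool) \<Rightarrow> 'a list \<Rightarrow> 'a \<Rightarrow> 'a \<Rightarrow> bool" where
  "cross E H u v \<longleftrightarrow> u \<notin> set H \<and> v \<notin> set H \<and> \<not> nested E H u v"

definition cyc_order4 :: "'a list \<Rightarrow> 'a \<Rightarrow> 'a \<Rightarrow> 'a \<Rightarrow> 'a \<Rightarrow> bool" where
  "cyc_order4 H a b c d \<longleftrightarrow> (\<exists>s i j k l. i < j \<and> j < k \<and> k < l \<and> l < length H \<and>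
     a = H ! ((s + i) mod length H) \<and> b = H ! ((s + j) mod length H) \<and>
     c = H ! ((s + k) mod length H) \<and> d = H ! ((s + l) mod length H))"

end

theory Submission
  imports Defs
begin

text \<open>
  If the neighbourhoods of \<open>u\<close> and \<open>v\<close> on the hole neither nest nor alternate, then an element
  of one that is missing from the other always produces nesting or alternation (cut the cycle at
  it and look at the first and last element of the other set), so the two neighbourhoods coincide;
  at most two vertices always nest and four or more always alternate, so they have exactly three.
  Three neighbours of a vertex on a hole are pairwise nonadjacent, or form a subpath (a clone),
  or contain exactly one edge, which gives a pyramid. In the first two cases a nonadjacent pair
  \<open>u\<close>, \<open>v\<close> would give a theta: between \<open>u\<close> and \<open>v\<close> through the three common neighbours, or
  between the two ends of the common subpath through \<open>u\<close>, \<open>v\<close> and the rest of the hole.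
\<close>

section \<open>Cyclic index arithmetic\<close>

lemma mod_add_left_cancel_less:
  fixes n p t t' :: nat
  assumes "t < n" "t' < n" "(p + t) mod n = (p + t') mod n"
  shows "t = t'"
proof -
  have "a = b" if "a \<le> b" "b < n" "(p + a) mod n = (p + b) mod n" for a b :: nat
  proof -
    have "n dvd b - a"
      using that mod_eq_dvd_iff_nat[of "p + a" "p + b" n] by simp
    then show "a = b"
      using that nat_dvd_not_less[of "b - a" n] by (cases "b - a = 0") auto
  qed
  from this[of t t'] this[of t' t] show ?thesis
    using assms by (cases "t \<le> t'") auto
qed

lemma Suc_mod_shift_iff:
  fixes n r i j :: nat
  assumes "i < n" "j < n"
  shows "(r + j) mod n = Suc ((r + i) mod n) mod n \<longleftrightarrow> j = Suc i mod n"
proof -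
  have "Suc ((r + i) mod n) mod n = (r + Suc i mod n) mod n"
    by (simp add: mod_Suc_eq mod_add_right_eq)
  moreover have "Suc i mod n < n"
    using assms by simp
  ultimately show ?thesis
    using mod_add_left_cancel_less[OF assms(2)] by metis
qed

lemma add_offset_mod:
  fixes n i k :: nat
  assumes "i < n" "k < n"
  shows "(i + (k + n - i) mod n) mod n = k"
proof -
  have "(i + (k + n - i) mod n) mod n = (i + (k + n - i)) mod n"
    by (simp add: mod_add_right_eq)
  also have "i + (k + n - i) = k + n"
    using assms by simp
  finally show ?thesis
    using assms by simp
qed

lemma Suc_mod_eq_iff:
  fixes n i j :: nat
  assumes "i < n" "j < n"
  shows "i = Suc j mod n \<longleftrightarrow> j = (i + n - 1) mod n"
proof (cases "Suc j < n")
  case True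
  then show ?thesis
    using assms by (cases i) auto
next
  case False
  then have "Suc j = n"
    using assms by simp
  then show ?thesis
    using assms by (cases i) auto
qed

section \<open>Nested and alternating vertex sets along a cycle\<close>

definition nested_sets :: "'a list \<Rightarrow> 'a set \<Rightarrow> 'a set \<Rightarrow> bool" where
  "nested_sets H A B \<longleftrightarrow>
     (\<exists>i j. i < length H \<and> j < length H \<and> i \<noteq> j \<and> A \<subseteq> arc H i j \<and> B \<subseteq> arc H j i)"

definition alternating_sets :: "'a list \<Rightarrow> 'a set \<Rightarrow> 'a set \<Rightarrow> bool" where
  "alternating_sets H A B \<longleftrightarrow> (\<exists>a b a' b'. distinct [a, b, a', b'] \<and> cyc_order4 H a b a' b' \<and>
     a \<in> A \<and> a' \<in> A \<and> b \<in> B \<and> b' \<in> B)"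

lemma nested_setsI:
  "i < length H \<Longrightarrow> j < length H \<Longrightarrow> i \<noteq> j \<Longrightarrow> A \<subseteq> arc H i j \<Longrightarrow> B \<subseteq> arc H j i \<Longrightarrow>
   nested_sets H A B"
  unfolding nested_sets_def by blast

lemma nested_sets_sym: "nested_sets H A B \<Longrightarrow> nested_sets H B A"
  unfolding nested_sets_def by blast

lemma nth_mem_arc_interval:
  assumes "i \<le> k" "k \<le> j" "j < length H"
  shows "H ! k \<in> arc H i j"
proof -
  have "j + length H - i = (j - i) + length H" "j - i < length H"
    using assms by auto
  then have "(j + length H - i) mod length H = j - i"
    by (metis mod_add_self2 mod_less)
  then have "H ! k = H ! ((i + (k - i)) mod length H) \<and> k - i \<le> (j + length H - i) mod length H"
    using assms by simp
  then show ?thesis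
    unfolding arc_def by blast
qed

lemma nth_mem_arc_wrap:
  assumes "j < i" "i < length H" "k < length H" "i \<le> k \<or> k \<le> j"
  shows "H ! k \<in> arc H i j"
proof -
  let ?n = "length H"
  have d: "(j + ?n - i) mod ?n = j + ?n - i"
    using assms by simp
  from assms(4) show ?thesis
  proof
    assume "i \<le> k"
    then have "H ! k = H ! ((i + (k - i)) mod ?n) \<and> k - i \<le> (j + ?n - i) mod ?n"
      using assms(3) d by simp
    then show ?thesis
      unfolding arc_def by blast
  next
    assume "k \<le> j"
    have "(i + (k + ?n - i)) mod ?n = k"
      using assms by simp
    then have "H ! k = H ! ((i + (k + ?n - i)) mod ?n) \<and> k + ?n - i \<le> (j + ?n - i) mod ?n"
      using \<open>k \<le> j\<close> d by simp
    then show ?thesis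
      unfolding arc_def by blast
  qed
qed

lemma nth_mem_arc_ends:
  assumes "i < length H" "j < length H"
  shows "H ! i \<in> arc H i j" "H ! j \<in> arc H i j"
  using nth_mem_arc_interval[of i _ j H] nth_mem_arc_wrap[of j i H] assms
  by (cases "i \<le> j"; force)+

lemma subset_arcI:
  assumes "A \<subseteq> set H" "\<And>k. k < length H \<Longrightarrow> H ! k \<in> A \<Longrightarrow> H ! k \<in> arc H i j"
  shows "A \<subseteq> arc H i j"
  using assms by (metis in_set_conv_nth subset_iff)

lemma arc_rotate:
  assumes "i < length H" "j < length H"
  shows "arc (rotate r H) i j = arc H ((r + i) mod length H) ((r + j) mod length H)"
proof -
  let ?n = "length H" and ?i = "(r + i) mod length H" and ?j = "(r + j) mod length H"
  have "H \<noteq> []"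
    using assms by auto
  then have n: "0 < ?n" "?i < ?n" "?j < ?n"
    by simp_all
  have "(?i + (j + ?n - i) mod ?n) mod ?n = (r + (i + (j + ?n - i) mod ?n) mod ?n) mod ?n"
    by (simp add: mod_add_left_eq mod_add_right_eq add.assoc)
  also have "\<dots> = (?i + (?j + ?n - ?i) mod ?n) mod ?n"
    using add_offset_mod[OF assms] add_offset_mod[OF n(2,3)] by simp
  finally have "(?j + ?n - ?i) mod ?n = (j + ?n - i) mod ?n"
    using mod_add_left_cancel_less[of _ ?n] n(1) by (metis mod_less_divisor)
  moreover have "rotate r H ! ((i + k) mod ?n) = H ! ((?i + k) mod ?n)" for k
    using n(1) by (simp add: nth_rotate mod_add_left_eq mod_add_right_eq add.assoc)
  ultimately show ?thesis
    unfolding arc_def by simp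
qed

lemma nested_sets_rotateD:
  assumes "nested_sets (rotate r H) A B"
  shows "nested_sets H A B"
proof -
  let ?n = "length H"
  obtain i j where ij: "i < ?n" "j < ?n" "i \<noteq> j"
    "A \<subseteq> arc (rotate r H) i j" "B \<subseteq> arc (rotate r H) j i"
    using assms unfolding nested_sets_def by auto
  moreover have "H \<noteq> []"
    using ij(1) by auto
  ultimately have "(r + i) mod ?n \<noteq> (r + j) mod ?n" "(r + i) mod ?n < ?n" "(r + j) mod ?n < ?n"
    using mod_add_left_cancel_less[of i ?n j r] by auto
  then show ?thesis
    unfolding nested_sets_def using ij(4,5) arc_rotate[OF ij(1,2)] arc_rotate[OF ij(2,1)] by metis
qed

lemma cyc_order4_rotate_left:
  assumes "cyc_order4 H a b c d"
  shows "cyc_order4 H b c d a"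
proof -
  let ?n = "length H"
  obtain s i j k l where ord: "i < j" "j < k" "k < l" "l < ?n"
    and abcd: "a = H ! ((s + i) mod ?n)" "b = H ! ((s + j) mod ?n)"
      "c = H ! ((s + k) mod ?n)" "d = H ! ((s + l) mod ?n)"
    using assms unfolding cyc_order4_def by blast
  have "s + j + (?n + i - j) = (s + i) + ?n"
    using ord by simp
  then have wrap: "(s + j + (?n + i - j)) mod ?n = (s + i) mod ?n"
    by (metis mod_add_self2)
  have shift: "s + j + (k - j) = s + k" "s + j + (l - j) = s + l"
    using ord by auto
  show ?thesis
    unfolding cyc_order4_def
    by (rule exI[of _ "s + j"], rule exI[of _ 0], rule exI[of _ "k - j"], rule exI[of _ "l - j"],
        rule exI[of _ "?n + i - j"]) (use ord abcd wrap shift in auto)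
qed

lemma cyc_order4_rotateD:
  assumes "cyc_order4 (rotate r H) a b c d"
  shows "cyc_order4 H a b c d"
proof -
  let ?n = "length H"
  obtain s i j k l where ord: "i < j" "j < k" "k < l" "l < ?n"
    and abcd: "a = rotate r H ! ((s + i) mod ?n)" "b = rotate r H ! ((s + j) mod ?n)"
      "c = rotate r H ! ((s + k) mod ?n)" "d = rotate r H ! ((s + l) mod ?n)"
    using assms unfolding cyc_order4_def by auto
  have "H \<noteq> []"
    using ord(4) by auto
  then have rot: "rotate r H ! ((s + t) mod ?n) = H ! ((r + s + t) mod ?n)" for t
    by (simp add: nth_rotate mod_add_right_eq add.assoc)
  show ?thesis
    unfolding cyc_order4_def
    by (rule exI[of _ "r + s"], rule exI[of _ i], rule exI[of _ j], rule exI[of _ k],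
        rule exI[of _ l]) (use ord abcd rot in auto)
qed

lemma alternating_sets_sym:
  assumes "alternating_sets H A B"
  shows "alternating_sets H B A"
proof -
  obtain a b a' b' where abab: "distinct [a, b, a', b']" "cyc_order4 H a b a' b'"
    "a \<in> A" "a' \<in> A" "b \<in> B" "b' \<in> B"
    using assms unfolding alternating_sets_def by blast
  show ?thesis
    unfolding alternating_sets_def
    by (rule exI[of _ b], rule exI[of _ a'], rule exI[of _ b'], rule exI[of _ a])
      (use abab cyc_order4_rotate_left in auto)
qed

lemma alternating_sets_rotateD:
  assumes "alternating_sets (rotate r H) A B"
  shows "alternating_sets H A B"
proof -
  obtain a b a' b' where abab: "distinct [a, b, a', b']" "cyc_order4 (rotate r H) a b a' b'"
    "a \<in> A" "a' \<in> A" "b \<in> B" "b' \<in> B"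
    using assms unfolding alternating_sets_def by blast
  show ?thesis
    unfolding alternating_sets_def
    by (rule exI[of _ a], rule exI[of _ b], rule exI[of _ a'], rule exI[of _ b'])
      (use abab cyc_order4_rotateD[OF abab(2)] in simp)
qed

lemma alternating_sets_nthI:
  assumes dist: "distinct H" and ord: "i < j" "j < k" "k < l" "l < length H"
    and mem: "H ! i \<in> A" "H ! k \<in> A" "H ! j \<in> B" "H ! l \<in> B"
  shows "alternating_sets H A B"
proof -
  have "cyc_order4 H (H ! i) (H ! j) (H ! k) (H ! l)"
    unfolding cyc_order4_def
    by (rule exI[of _ 0], rule exI[of _ i], rule exI[of _ j], rule exI[of _ k], rule exI[of _ l])
      (use ord in simp)
  moreover have ne: "H ! x \<noteq> H ! y" if "x < y" "y < length H" for x y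
    using nth_eq_iff_index_eq[OF dist, of x y] that by simp
  then have "distinct [H ! i, H ! j, H ! k, H ! l]"
    using ne[of i j] ne[of i k] ne[of i l] ne[of j k] ne[of j l] ne[of k l] ord by auto
  ultimately show ?thesis
    unfolding alternating_sets_def using mem by blast
qed

lemma nested_sets_if_interval_split:
  assumes AB: "A \<subseteq> set H" "B \<subseteq> set H" and bounds: "0 < lo" "lo \<le> hi" "hi < length H"
    and B_in: "\<And>k. k < length H \<Longrightarrow> H ! k \<in> B \<Longrightarrow> lo \<le> k \<and> k \<le> hi"
    and A_out: "\<And>k. H ! k \<in> A \<Longrightarrow> k \<le> lo \<or> hi \<le> k"
  shows "nested_sets H A B"
proof (cases "lo = hi")
  case True
  have "A \<subseteq> arc H lo (lo - 1)"
    using AB(1) bounds by (intro subset_arcI nth_mem_arc_wrap) auto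
  moreover have "B \<subseteq> arc H (lo - 1) lo"
    using AB(2) B_in True bounds by (intro subset_arcI nth_mem_arc_interval; fastforce)
  ultimately show ?thesis
    using bounds by (intro nested_setsI[of lo H "lo - 1"]) auto
next
  case False
  have "A \<subseteq> arc H hi lo"
    using AB(1) A_out False bounds by (intro subset_arcI nth_mem_arc_wrap; fastforce)
  moreover have "B \<subseteq> arc H lo hi"
    using AB(2) B_in bounds by (intro subset_arcI nth_mem_arc_interval; fastforce)
  ultimately show ?thesis
    using False bounds by (intro nested_setsI[of hi H lo]) auto
qed

lemma nested_or_alternating_if_hd_not_mem:
  assumes dist: "distinct H" and n: "2 \<le> length H" and AB: "A \<subseteq> set H" "B \<subseteq> set H"
    and hd: "H ! 0 \<in> A" "H ! 0 \<notin> B"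
  shows "nested_sets H A B \<or> alternating_sets H A B"
proof (cases "B = {}")
  case True
  have "A \<subseteq> arc H 1 0"
    using AB(1) n by (intro subset_arcI nth_mem_arc_wrap) auto
  then have "nested_sets H A B"
    using True n by (intro nested_setsI[of 1 H 0]) auto
  then show ?thesis ..
next
  case False
  define IB where "IB = {k. k < length H \<and> H ! k \<in> B}"
  obtain e where "e \<in> B"
    using False by blast
  then obtain k where "k < length H" "H ! k = e"
    using AB(2) by (metis in_set_conv_nth subsetD)
  then have "finite IB" "IB \<noteq> {}"
    unfolding IB_def using \<open>e \<in> B\<close> by auto
  define lo hi where "lo = Min IB" and "hi = Max IB"
  have IB: "lo \<in> IB" "hi \<in> IB" "\<And>k. k \<in> IB \<Longrightarrow> lo \<le> k \<and> k \<le> hi"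
    using \<open>finite IB\<close> \<open>IB \<noteq> {}\<close> unfolding lo_def hi_def by auto
  have bounds: "0 < lo" "lo \<le> hi" "hi < length H"
    using IB hd(2) unfolding IB_def by (auto intro: Nat.gr0I)
  show ?thesis
  proof (cases "\<exists>t. lo < t \<and> t < hi \<and> H ! t \<in> A")
    case True
    then obtain t where "lo < t" "t < hi" "H ! t \<in> A"
      by blast
    then have "alternating_sets H A B"
      using alternating_sets_nthI[OF dist, of 0 lo t hi] bounds hd(1) IB(1,2)
      unfolding IB_def by blast
    then show ?thesis ..
  next
    case False
    then have "nested_sets H A B"
      using nested_sets_if_interval_split[OF AB bounds] IB(3) unfolding IB_def
      by (metis (no_types, lifting) mem_Collect_eq not_le)
    then show ?thesis ..
  qed
qed

lemma nested_or_alternating_if_not_subset: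
  assumes "distinct H" "2 \<le> length H" "A \<subseteq> set H" "B \<subseteq> set H" "a \<in> A" "a \<notin> B"
  shows "nested_sets H A B \<or> alternating_sets H A B"
proof -
  obtain p where p: "p < length H" "H ! p = a"
    using assms(3,5) by (metis in_set_conv_nth subsetD)
  have "H \<noteq> []"
    using p(1) by auto
  then have "rotate p H ! 0 = a"
    using p by (simp add: nth_rotate)
  then have "nested_sets (rotate p H) A B \<or> alternating_sets (rotate p H) A B"
    using nested_or_alternating_if_hd_not_mem[of "rotate p H" A B] assms by simp
  then show ?thesis
    using nested_sets_rotateD alternating_sets_rotateD by blast
qed

lemma alternating_sets_if_card_ge4:
  assumes dist: "distinct H" and A: "A \<subseteq> set H" "4 \<le> card A"
  shows "alternating_sets H A A"
proof -
  define IA where "IA = {k. k < length H \<and> H ! k \<in> A}"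
  have "A = (!) H ` IA"
  proof
    show "A \<subseteq> (!) H ` IA"
    proof
      fix e
      assume "e \<in> A"
      moreover obtain k where "k < length H" "H ! k = e"
        using A(1) \<open>e \<in> A\<close> by (metis in_set_conv_nth subsetD)
      ultimately show "e \<in> (!) H ` IA"
        unfolding IA_def by force
    qed
  qed (auto simp: IA_def)
  moreover have "inj_on ((!) H) IA"
    using dist unfolding inj_on_def IA_def by (simp add: nth_eq_iff_index_eq)
  ultimately have "card IA = card A"
    by (simp add: card_image)
  define xs where "xs = sorted_list_of_set IA"
  have xs: "sorted_wrt (<) xs" "set xs = IA" "4 \<le> length xs"
    using A(2) \<open>card IA = card A\<close> unfolding xs_def IA_def by auto
  have mem: "xs ! m \<in> IA" if "m < 4" for m
    using xs that nth_mem by (metis less_le_trans)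
  have ord: "xs ! 0 < xs ! 1" "xs ! 1 < xs ! 2" "xs ! 2 < xs ! 3"
    using sorted_wrt_nth_less[OF xs(1)] xs(3) by auto
  have "xs ! 3 < length H"
    using mem[of 3] unfolding IA_def by simp
  moreover have "H ! (xs ! m) \<in> A" if "m < 4" for m
    using mem[OF that] unfolding IA_def by simp
  ultimately show ?thesis
    using alternating_sets_nthI[OF dist ord] by simp
qed

lemma nested_sets_if_card_le2:
  assumes dist: "distinct H" and n: "2 \<le> length H" and A: "A \<subseteq> set H" "card A \<le> 2"
  shows "nested_sets H A A"
proof -
  have "2 \<le> card (set H)"
    using n dist by (simp add: distinct_card)
  then obtain C where C: "A \<subseteq> C" "C \<subseteq> set H" "card C = 2"
    using exists_subset_between[OF A(2) _ A(1)] by auto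
  then obtain x y where xy: "C = {x, y}" "x \<noteq> y"
    by (meson card_2_iff)
  then obtain i j where ij: "i < length H" "j < length H" "H ! i = x" "H ! j = y"
    using C(2) by (metis in_set_conv_nth insert_subset)
  then have "i \<noteq> j"
    using xy(2) by auto
  moreover have "A \<subseteq> arc H i j" "A \<subseteq> arc H j i"
    using C(1) xy(1) ij nth_mem_arc_ends[of i H j] nth_mem_arc_ends[of j H i] by auto
  ultimately show ?thesis
    unfolding nested_sets_def using ij(1,2) by blast
qed

lemma eq_card_3_if_not_nested_not_alternating:
  assumes dist: "distinct H" and n: "2 \<le> length H" and AB: "A \<subseteq> set H" "B \<subseteq> set H"
    and not_nested: "\<not> nested_sets H A B" and not_alternating: "\<not> alternating_sets H A B"
  shows "A = B" "card A = 3"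
proof -
  have "A \<subseteq> B" "B \<subseteq> A"
    using nested_or_alternating_if_not_subset[OF dist n AB(1,2)]
      nested_or_alternating_if_not_subset[OF dist n AB(2,1)]
      not_nested not_alternating nested_sets_sym alternating_sets_sym by blast+
  then show "A = B"
    by blast
  then show "card A = 3"
    using alternating_sets_if_card_ge4[OF dist AB(1)] nested_sets_if_card_le2[OF dist n AB(1)]
      not_nested not_alternating by fastforce
qed

section \<open>Holes and induced paths\<close>

lemma graph_symD: "graph V E \<Longrightarrow> E x y \<Longrightarrow> E y x"
  unfolding graph_def by blast

lemma graph_irreflD: "graph V E \<Longrightarrow> \<not> E x x"
  unfolding graph_def by blast

lemma hole_length: "hole E H \<Longrightarrow> 4 \<le> length H"
  unfolding hole_def by blast

lemma hole_distinct: "hole E H \<Longrightarrow> distinct H"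
  unfolding hole_def by blast

lemma hole_adj_iff:
  "hole E H \<Longrightarrow> i < length H \<Longrightarrow> j < length H \<Longrightarrow>
   E (H ! i) (H ! j) \<longleftrightarrow> j = Suc i mod length H \<or> i = Suc j mod length H"
  unfolding hole_def by blast

lemma nbrs_in_subset: "nbrs_in E H u \<subseteq> set H"
  unfolding nbrs_in_def by blast

lemma nbrs_in_cong: "set L = set H \<Longrightarrow> nbrs_in E L u = nbrs_in E H u"
  unfolding nbrs_in_def by simp

lemma induces_holeI: "hole E xs \<Longrightarrow> set xs = S \<Longrightarrow> induces_hole E S"
  unfolding induces_hole_def by blast

lemma ipath_pair:
  assumes "graph V E" "a \<noteq> b" "E a b"
  shows "ipath E [a, b]"
proof -
  have "E b a" "\<not> E a a" "\<not> E b b"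
    using assms graph_symD graph_irreflD by metis+
  then show ?thesis
    using assms unfolding ipath_def by (auto simp: numeral_2_eq_2 less_Suc_eq)
qed

lemma ipath_triple:
  assumes "graph V E" "distinct [a, b, c]" "E a b" "E b c" "\<not> E a c"
  shows "ipath E [a, b, c]"
proof -
  have "E b a" "E c b" "\<not> E c a" "\<not> E a a" "\<not> E b b" "\<not> E c c"
    using assms graph_symD graph_irreflD by metis+
  then show ?thesis
    using assms unfolding ipath_def by (auto simp: numeral_3_eq_3 less_Suc_eq)
qed

lemma ipath_rev:
  assumes "ipath E P"
  shows "ipath E (rev P)"
proof -
  have "E (rev P ! i) (rev P ! j) \<longleftrightarrow> i + 1 = j \<or> j + 1 = i"
    if "i < length P" "j < length P" for i j
    using assms that unfolding ipath_def by (auto simp: rev_nth)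
  then show ?thesis
    using assms unfolding ipath_def by auto
qed

lemma ipath_take_hole:
  assumes "hole E H" "0 < m" "m < length H"
  shows "ipath E (take m H)"
proof -
  have "E (H ! i) (H ! j) \<longleftrightarrow> i + 1 = j \<or> j + 1 = i" if "i < m" "j < m" for i j
    using hole_adj_iff[OF assms(1), of i j] that assms(3) by auto
  then show ?thesis
    using assms unfolding ipath_def hole_def by auto
qed

lemma ipath_drop_hole:
  assumes "hole E H" "0 < q" "q < length H"
  shows "ipath E (drop q H)"
proof -
  let ?n = "length H"
  have succ: "q + j = Suc (q + i) mod ?n \<longleftrightarrow> i + 1 = j" if "i < ?n - q" "j < ?n - q" for i j
  proof (cases "Suc (q + i) < ?n")
    case False
    then have "Suc (q + i) = ?n"
      using that by linarith
    then show ?thesis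
      using that assms(2) by auto
  qed auto
  have "E (H ! (q + i)) (H ! (q + j)) \<longleftrightarrow> i + 1 = j \<or> j + 1 = i"
    if "i < ?n - q" "j < ?n - q" for i j
    using hole_adj_iff[OF assms(1), of "q + i" "q + j"] succ[OF that] succ[OF that(2,1)] that
    by simp
  then show ?thesis
    using assms unfolding ipath_def hole_def by auto
qed

lemma ipath_of_hole_Cons:
  assumes "hole E (y # P)"
  shows "ipath E P"
proof -
  have "P \<noteq> []"
    using hole_length[OF assms] by auto
  then show ?thesis
    using ipath_drop_hole[OF assms, of 1] by simp
qed

lemma set_take_Suc_drop:
  assumes "distinct L" "q < length L"
  shows "set (take (Suc q) L) \<inter> set (drop q L) = {L ! q}"
    and "set (take (Suc q) L) \<union> set (drop q L) = set L"
proof -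
  have L: "L = take q L @ L ! q # drop (Suc q) L"
    using id_take_nth_drop[OF assms(2)] .
  have "take (Suc q) L = take q L @ [L ! q]" "drop q L = L ! q # drop (Suc q) L"
    using take_Suc_conv_app_nth[OF assms(2)] Cons_nth_drop_Suc[OF assms(2)] by simp_all
  moreover have "distinct (take q L @ L ! q # drop (Suc q) L)"
    using assms(1) L by simp
  then have "set (take q L) \<inter> set (drop (Suc q) L) = {}"
    "L ! q \<notin> set (take q L)" "L ! q \<notin> set (drop (Suc q) L)"
    by auto
  moreover have "set L = set (take q L) \<union> {L ! q} \<union> set (drop (Suc q) L)"
    using arg_cong[OF L, of set] by simp
  ultimately show "set (take (Suc q) L) \<inter> set (drop q L) = {L ! q}"
    and "set (take (Suc q) L) \<union> set (drop q L) = set L"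
    by auto
qed

lemma hole_split_at:
  assumes L: "hole E L" and q: "0 < q" "Suc q < length L"
  shows "ipath E (take (Suc q) L)" "hd (take (Suc q) L) = L ! 0" "last (take (Suc q) L) = L ! q"
    and "ipath E (drop q L)" "hd (drop q L) = L ! q" "last (drop q L) = L ! (length L - 1)"
    and "set (take (Suc q) L) \<inter> set (drop q L) = {L ! q}"
    and "set (take (Suc q) L) \<union> set (drop q L) = set L"
proof -
  have "L \<noteq> []"
    using q by auto
  with q have "take (Suc q) L \<noteq> []" "drop q L \<noteq> []"
    by simp_all
  then show "ipath E (take (Suc q) L)" "hd (take (Suc q) L) = L ! 0" "last (take (Suc q) L) = L ! q"
    and "ipath E (drop q L)" "hd (drop q L) = L ! q" "last (drop q L) = L ! (length L - 1)"
    using ipath_take_hole[OF L, of "Suc q"] ipath_drop_hole[OF L, of q] q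
    by (auto simp: hd_conv_nth last_conv_nth hd_drop_conv_nth)
  show "set (take (Suc q) L) \<inter> set (drop q L) = {L ! q}"
    and "set (take (Suc q) L) \<union> set (drop q L) = set L"
    using set_take_Suc_drop[OF hole_distinct[OF L], of q] q by simp_all
qed

lemma hole_Cons_ipath:
  assumes "graph V E" "ipath E P" "3 \<le> length P" "w \<notin> set P"
    and "\<And>x. x \<in> set P \<Longrightarrow> E w x \<longleftrightarrow> x = hd P \<or> x = last P"
  shows "hole E (w # P)"
proof -
  let ?m = "length P"
  have m: "0 < ?m" "?m - 1 < ?m" "Suc 0 mod Suc ?m = 1"
    using assms(3) by auto
  have P: "distinct P" "\<And>i j. i < ?m \<Longrightarrow> j < ?m \<Longrightarrow> E (P ! i) (P ! j) \<longleftrightarrow> i + 1 = j \<or> j + 1 = i"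
    using assms(2) unfolding ipath_def by auto
  have "hd P = P ! 0" "last P = P ! (?m - 1)"
    using m(1) by (simp_all add: hd_conv_nth last_conv_nth)
  then have w: "E w (P ! j) \<longleftrightarrow> j = 0 \<or> j = ?m - 1" if "j < ?m" for j
    using assms(5)[of "P ! j"] that P(1) m by (auto simp: nth_eq_iff_index_eq)
  have succ: "Suc (Suc k) mod Suc ?m = (if k = ?m - 1 then 0 else Suc (Suc k))" if "k < ?m" for k
    using that m(1) by (cases "k = ?m - 1") auto
  have sym: "E x y \<longleftrightarrow> E y x" for x y
    using graph_symD[OF assms(1)] by blast
  have "E ((w # P) ! i) ((w # P) ! j) \<longleftrightarrow> j = Suc i mod Suc ?m \<or> i = Suc j mod Suc ?m"
    if "i < Suc ?m" "j < Suc ?m" for i j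
  proof (cases i)
    case 0
    show ?thesis
    proof (cases j)
      case 0
      then show ?thesis
        using \<open>i = 0\<close> graph_irreflD[OF assms(1)] m by simp
    next
      case (Suc j')
      then show ?thesis
        using \<open>i = 0\<close> that w[of j'] succ[of j'] m by auto
    qed
  next
    case (Suc i')
    show ?thesis
    proof (cases j)
      case 0
      then show ?thesis
        using Suc that w[of i'] succ[of i'] m sym[of w] by auto
    next
      case (Suc j')
      then show ?thesis
        using \<open>i = Suc i'\<close> that P(2)[of i' j'] succ[of i'] succ[of j'] by auto
    qed
  qed
  then show ?thesis
    using assms P(1) unfolding hole_def by auto
qed

lemma hole_Cons_if_nbrs_ends:
  assumes g: "graph V E" and P: "ipath E P" "3 \<le> length P" "set P \<subseteq> set L"
    and u: "u \<notin> set L" "nbrs_in E L u \<inter> set P = {hd P, last P}"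
  shows "hole E (u # P)"
proof (rule hole_Cons_ipath[OF g P(1,2)])
  show "u \<notin> set P"
    using u(1) P(3) by blast
  show "E u e \<longleftrightarrow> e = hd P \<or> e = last P" if "e \<in> set P" for e
    using u(2) that P(3) unfolding nbrs_in_def by blast
qed

lemma hole_rotate:
  assumes "hole E H"
  shows "hole E (rotate r H)"
proof -
  let ?n = "length H"
  have H: "4 \<le> ?n" "distinct H"
    using assms unfolding hole_def by auto
  have "E (rotate r H ! i) (rotate r H ! j) \<longleftrightarrow> j = Suc i mod ?n \<or> i = Suc j mod ?n"
    if ij: "i < ?n" "j < ?n" for i j
  proof -
    have "H \<noteq> []"
      using ij by auto
    then have r: "(r + i) mod ?n < ?n" "(r + j) mod ?n < ?n"
      by simp_all
    have "E (rotate r H ! i) (rotate r H ! j) \<longleftrightarrow>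
          E (H ! ((r + i) mod ?n)) (H ! ((r + j) mod ?n))"
      using ij by (simp add: nth_rotate)
    also have "\<dots> \<longleftrightarrow> (r + j) mod ?n = Suc ((r + i) mod ?n) mod ?n \<or>
                     (r + i) mod ?n = Suc ((r + j) mod ?n) mod ?n"
      using hole_adj_iff[OF assms r] .
    also have "\<dots> \<longleftrightarrow> j = Suc i mod ?n \<or> i = Suc j mod ?n"
      using Suc_mod_shift_iff[OF ij] Suc_mod_shift_iff[OF ij(2,1)] by simp
    finally show ?thesis .
  qed
  then show ?thesis
    using H unfolding hole_def by simp
qed

lemma hole_rotate_to_hd:
  assumes "hole E H" "y \<in> set H"
  obtains P where "hole E (y # P)" "set (y # P) = set H"
proof -
  obtain i where i: "i < length H" "H ! i = y"
    using assms(2) by (auto simp: in_set_conv_nth)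
  have "H \<noteq> []"
    using i by auto
  with i have "rotate i H ! 0 = y" "rotate i H \<noteq> []"
    by (simp_all add: nth_rotate)
  then have "rotate i H = y # tl (rotate i H)"
    by (metis hd_conv_nth list.collapse)
  then show thesis
    using that[of "tl (rotate i H)"] hole_rotate[OF assms(1), of i] by simp
qed

lemma nbrs_in_hole_nth:
  assumes "hole E H" "i < length H"
  shows "nbrs_in E H (H ! i) = {H ! ((i + length H - 1) mod length H), H ! (Suc i mod length H)}"
    (is "_ = {H ! ?p, H ! ?s}")
proof -
  let ?n = "length H"
  have "H \<noteq> []"
    using assms(2) by auto
  then have ps: "?p < ?n" "?s < ?n"
    by simp_all
  have dist: "distinct H"
    using assms(1) unfolding hole_def by blast
  have "E (H ! i) (H ! j) \<longleftrightarrow> j = ?s \<or> i = Suc j mod ?n" if "j < ?n" for j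
    using hole_adj_iff[OF assms that] .
  also have "\<dots> j \<longleftrightarrow> j = ?s \<or> j = ?p" if "j < ?n" for j
    using Suc_mod_eq_iff[OF assms(2) that] by simp
  also have "\<dots> j \<longleftrightarrow> H ! j \<in> {H ! ?p, H ! ?s}" if "j < ?n" for j
    using dist that ps by (auto simp: nth_eq_iff_index_eq)
  finally have "x \<in> nbrs_in E H (H ! i) \<longleftrightarrow> x \<in> {H ! ?p, H ! ?s}" if "x \<in> set H" for x
    using that unfolding nbrs_in_def by (auto simp: in_set_conv_nth)
  moreover have "nbrs_in E H (H ! i) \<subseteq> set H" "{H ! ?p, H ! ?s} \<subseteq> set H"
    using ps unfolding nbrs_in_def by auto
  ultimately show ?thesis
    by blast
qed

lemma nbrs_in_hole_hd:
  assumes "hole E (y # P)"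
  shows "nbrs_in E (y # P) y = {last P, hd P}"
proof -
  have "3 \<le> length P" "P \<noteq> []"
    using hole_length[OF assms] by auto
  then have "(y # P) ! length P = last P" "(y # P) ! Suc 0 = hd P"
    by (simp_all add: last_conv_nth hd_conv_nth)
  then show ?thesis
    using nbrs_in_hole_nth[OF assms, of 0] \<open>P \<noteq> []\<close> by simp
qed

lemma hole_Cons_rev:
  assumes g: "graph V E" and L: "hole E (y # P)"
  shows "hole E (y # rev P)"
proof (rule hole_Cons_ipath[OF g])
  show "ipath E (rev P)"
    using ipath_rev[OF ipath_of_hole_Cons[OF L]] .
  show "3 \<le> length (rev P)"
    using hole_length[OF L] by simp
  show "y \<notin> set (rev P)"
    using hole_distinct[OF L] by simp
  have "P \<noteq> []"
    using hole_length[OF L] by auto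
  then show "E y x \<longleftrightarrow> x = hd (rev P) \<or> x = last (rev P)" if "x \<in> set (rev P)" for x
    using nbrs_in_hole_hd[OF L] that unfolding nbrs_in_def by (auto simp: hd_rev last_rev)
qed

lemma hole_rotate_to_edge:
  assumes g: "graph V E" and H: "hole E H" and ab: "a \<in> set H" "b \<in> set H" "E a b"
  obtains L where "hole E L" "set L = set H" "L ! 0 = b" "L ! (length L - 1) = a"
proof -
  obtain P where P: "hole E (b # P)" "set (b # P) = set H"
    using hole_rotate_to_hd[OF H ab(2)] .
  have "P \<noteq> []"
    using hole_length[OF P(1)] by auto
  have "a \<in> nbrs_in E (b # P) b"
    using ab(1) P(2) graph_symD[OF g ab(3)] unfolding nbrs_in_def by simp
  then have "a = last P \<or> a = hd P"
    using nbrs_in_hole_hd[OF P(1)] by simp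
  then obtain Q where Q: "hole E (b # Q)" "set Q = set P" "last Q = a"
  proof
    assume "a = hd P"
    then show thesis
      using that[of "rev P"] hole_Cons_rev[OF g P(1)] \<open>P \<noteq> []\<close> by (simp add: last_rev)
  qed (use P(1) in auto)
  moreover have "Q \<noteq> []"
    using Q(2) \<open>P \<noteq> []\<close> by auto
  ultimately show thesis
    using that[of "b # Q"] P(2) by (simp add: last_conv_nth)
qed

lemma clone_of_iff:
  assumes "hole E H"
  shows "clone_of E H u y \<longleftrightarrow> u \<notin> set H \<and> y \<in> set H \<and> nbrs_in E H u = insert y (nbrs_in E H y)"
proof -
  have "{H ! ((i + length H - 1) mod length H), H ! i, H ! (Suc i mod length H)} =
        insert (H ! i) (nbrs_in E H (H ! i))" if "i < length H" for i
    using nbrs_in_hole_nth[OF assms that] by auto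
  then show ?thesis
    unfolding clone_of_def by (metis in_set_conv_nth)
qed

lemma clone_of_if_nbrs_adjacent_pair:
  assumes H: "hole E H" and u: "u \<notin> set H"
    and nbrs: "nbrs_in E H u = {a, b, c}" and edges: "E a b" "E a c" "b \<noteq> c"
  shows "clone_of E H u a"
proof -
  have abc: "a \<in> set H" "b \<in> set H" "c \<in> set H"
    using nbrs_in_subset[of E H u] unfolding nbrs by blast+
  obtain i where i: "i < length H" "H ! i = a"
    using abc(1) by (metis in_set_conv_nth)
  have "{b, c} \<subseteq> nbrs_in E H a"
    using abc edges unfolding nbrs_in_def by simp
  then have "nbrs_in E H a = {b, c}"
    using nbrs_in_hole_nth[OF H i(1)] i(2) edges(3) by auto
  then show ?thesis
    using clone_of_iff[OF H] u abc(1) nbrs by auto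
qed

section \<open>Thetas and pyramids\<close>

lemma theta_if_nonadjacent_bridges:
  assumes g: "graph V E" and P: "ipath E P" "3 \<le> length P" "set P \<subseteq> V"
    and st: "s \<in> V" "t \<in> V" "s \<notin> set P" "t \<notin> set P" "s \<noteq> t" "\<not> E s t"
    and bridges: "\<And>w e. w \<in> {s, t} \<Longrightarrow> e \<in> set P \<Longrightarrow> E w e \<longleftrightarrow> e = hd P \<or> e = last P"
  shows "has_theta V E"
proof -
  let ?a = "hd P" and ?b = "last P"
  have "P \<noteq> []"
    using P(2) by auto
  then have ends: "?a = P ! 0" "?b = P ! (length P - 1)" "?a \<in> set P" "?b \<in> set P"
    by (simp_all add: hd_conv_nth last_conv_nth)
  have ab: "?a \<noteq> ?b" "\<not> E ?a ?b"
    using P(1,2) ends(1,2) unfolding ipath_def by (auto simp: nth_eq_iff_index_eq)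
  have w: "E w ?a" "E ?a w" "E w ?b" "w \<noteq> ?a" "w \<noteq> ?b" if "w \<in> {s, t}" for w
    using bridges[OF that] ends(3,4) that st(3,4) graph_symD[OF g, of w ?a] by auto
  have path: "path_from_to V E [?a, w, ?b] ?a ?b" if "w \<in> {s, t}" for w
    using ipath_triple[OF g, of ?a w ?b] w[OF that] ab ends(3,4) that st P(3)
    unfolding path_from_to_def by auto
  have path_P: "path_from_to V E P ?a ?b"
    using P(1,3) unfolding path_from_to_def by auto
  have hole_P: "induces_hole E (set [?a, w, ?b] \<union> set P)" if "w \<in> {s, t}" for w
  proof (rule induces_holeI)
    show "hole E (w # P)"
      using hole_Cons_ipath[OF g P(1,2)] bridges[OF that] that st(3,4) by blast
  qed (use ends in auto)
  have hole_st: "induces_hole E (set [?a, s, ?b] \<union> set [?a, t, ?b])"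
  proof (rule induces_holeI)
    show "hole E (t # [?a, s, ?b])"
    proof (rule hole_Cons_ipath[OF g])
      show "ipath E [?a, s, ?b]"
        using path[of s] unfolding path_from_to_def by simp
      show "E t e \<longleftrightarrow> e = hd [?a, s, ?b] \<or> e = last [?a, s, ?b]" if "e \<in> set [?a, s, ?b]" for e
        using that w[of t] st(6) graph_symD[OF g, of t s] by auto
    qed (use w[of t] st(5) in auto)
  qed auto
  have disj: "set [?a, s, ?b] \<inter> set [?a, t, ?b] = {?a, ?b}"
    "set [?a, s, ?b] \<inter> set P = {?a, ?b}" "set [?a, t, ?b] \<inter> set P = {?a, ?b}"
    using st(3-5) ends(3,4) by auto
  show ?thesis
    unfolding has_theta_def
    apply (rule exI[of _ ?a], rule exI[of _ ?b], rule exI[of _ "[?a, s, ?b]"],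
        rule exI[of _ "[?a, t, ?b]"], rule exI[of _ P])
    using ab path[of s] path[of t] path_P disj hole_P[of s] hole_P[of t] hole_st
    by (intro conjI; simp only: insert_iff simp_thms)
qed

lemma theta_if_nonadjacent_stable_twins:
  assumes g: "graph V E" and H: "set H \<subseteq> V"
    and uv: "u \<in> V" "v \<in> V" "u \<noteq> v" "\<not> E u v"
    and twins: "nbrs_in E H u = nbrs_in E H v" and card: "card (nbrs_in E H u) = 3"
    and stable: "\<forall>x\<in>nbrs_in E H u. \<forall>y\<in>nbrs_in E H u. \<not> E x y"
  shows "has_theta V E"
proof -
  obtain x y z where xyz: "nbrs_in E H u = {x, y, z}" "distinct [x, y, z]"
    using card by (auto simp: card_3_iff)
  have adj: "E w c" if "w \<in> {u, v}" "c \<in> {x, y, z}" for w c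
    using that xyz(1) twins unfolding nbrs_in_def by auto
  have adj': "E c w" "c \<noteq> w" if "w \<in> {u, v}" "c \<in> {x, y, z}" for w c
    using adj[OF that] graph_symD[OF g] graph_irreflD[OF g] by metis+
  have stable': "\<not> E c d" if "c \<in> {x, y, z}" "d \<in> {x, y, z}" for c d
    using stable that xyz(1) by blast
  have V: "x \<in> V" "y \<in> V" "z \<in> V"
    using xyz(1) nbrs_in_subset[of E H u] H by auto
  have "ipath E [u, z, v]"
    using ipath_triple[OF g, of u z v] adj[of u z] adj'[of v z] adj'[of u z] uv(3,4) by simp
  moreover have "E w e \<longleftrightarrow> e = hd [u, z, v] \<or> e = last [u, z, v]"
    if "w \<in> {x, y}" "e \<in> set [u, z, v]" for w e
    using that adj'[of u w] adj'[of v w] stable'[of w z] by auto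
  moreover have "x \<notin> set [u, z, v]" "y \<notin> set [u, z, v]"
    using adj'[of u x] adj'[of v x] adj'[of u y] adj'[of v y] xyz(2) by auto
  ultimately show ?thesis
    using theta_if_nonadjacent_bridges[OF g, of "[u, z, v]" x y] uv V xyz(2) stable'[of x y]
    by simp
qed

lemma theta_if_nonadjacent_clones:
  assumes g: "graph V E" and H: "hole E H" "set H \<subseteq> V"
    and uv: "u \<in> V" "v \<in> V" "u \<noteq> v" "\<not> E u v"
    and clones: "clone_of E H u y" "clone_of E H v y"
  shows "has_theta V E"
proof -
  have y: "u \<notin> set H" "v \<notin> set H" "y \<in> set H"
    "nbrs_in E H u = insert y (nbrs_in E H y)" "nbrs_in E H v = insert y (nbrs_in E H y)"
    using clones clone_of_iff[OF H(1)] by auto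
  obtain P where P: "hole E (y # P)" "set (y # P) = set H"
    using hole_rotate_to_hd[OF H(1) y(3)] .
  have "y \<notin> set P"
    using hole_distinct[OF P(1)] by simp
  then have "E w e \<longleftrightarrow> e = hd P \<or> e = last P" if "w \<in> {u, v}" "e \<in> set P" for w e
    using that y(4,5) nbrs_in_cong[OF P(2)] nbrs_in_hole_hd[OF P(1)] P(2)
    unfolding nbrs_in_def by (auto simp: set_eq_iff)
  moreover have "set P \<subseteq> V" "u \<notin> set P" "v \<notin> set P"
    using P(2) H(2) y(1,2) by auto
  ultimately show ?thesis
    using theta_if_nonadjacent_bridges[OF g ipath_of_hole_Cons[OF P(1)] _ _ uv(1,2) _ _ uv(3,4)]
      hole_length[OF P(1)] by simp
qed

lemma pyramid_if_hole_nbrs_edge_and_far: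
  assumes g: "graph V E" and L: "hole E L" "set L \<subseteq> V" and u: "u \<in> V" "u \<notin> set L"
    and nbrs: "nbrs_in E L u = {L ! 0, L ! (length L - 1), L ! q}"
    and q: "2 \<le> q" "q + 3 \<le> length L"
  shows "has_pyramid V E"
proof -
  let ?n = "length L"
  let ?x = "L ! (?n - 1)" and ?y = "L ! 0" and ?w = "L ! q"
  let ?T = "take (Suc q) L" and ?D = "drop q L"
  have "L \<noteq> []"
    using q by auto
  then have xyw: "?x \<noteq> ?y" "?x \<noteq> ?w" "?y \<noteq> ?w" "?x \<in> set L" "?y \<in> set L" "?w \<in> set L"
    using hole_distinct[OF L(1)] q by (auto simp: nth_eq_iff_index_eq)
  have "E ?y ?x"
    using hole_adj_iff[OF L(1), of 0 "?n - 1"] q \<open>L \<noteq> []\<close> by simp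
  then have tri: "triangle E u ?y ?x"
    using nbrs xyw u(2) unfolding triangle_def nbrs_in_def by auto
  have T: "ipath E ?T" "hd ?T = ?y" "last ?T = ?w" "3 \<le> length ?T"
    and D: "ipath E ?D" "hd ?D = ?w" "last ?D = ?x" "3 \<le> length ?D"
    and TD: "set ?T \<inter> set ?D = {?w}" "set ?T \<union> set ?D = set L"
    using hole_split_at[OF L(1), of q] q by auto
  have ends: "?y \<in> set ?T" "?w \<in> set ?T" "?x \<in> set ?D" "?w \<in> set ?D"
    using T(2-4) D(2-4) by (metis hd_in_set last_in_set list.size(3) not_numeral_le_zero)+
  have "nbrs_in E L u \<inter> set ?T = {hd ?T, last ?T}" "nbrs_in E L u \<inter> set ?D = {hd ?D, last ?D}"
    using nbrs ends TD(1) xyw(1-3) T(2,3) D(2,3) by auto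
  moreover have "set ?T \<subseteq> set L" "set ?D \<subseteq> set L"
    using TD(2) by blast+
  ultimately have "hole E (u # ?T)" "hole E (u # ?D)"
    using hole_Cons_if_nbrs_ends[OF g T(1,4) _ u(2)] hole_Cons_if_nbrs_ends[OF g D(1,4) _ u(2)]
    by blast+
  then have holes: "induces_hole E (set [?w, u] \<union> set (rev ?T))"
    "induces_hole E (set [?w, u] \<union> set ?D)" "induces_hole E (set (rev ?T) \<union> set ?D)"
    using induces_holeI[of E "u # ?T"] induces_holeI[of E "u # ?D"] induces_holeI[OF L(1)]
      ends(2,4) TD(2)
    by (simp_all add: insert_absorb)
  have "E ?w u" "?w \<noteq> u"
    using nbrs xyw(6) u(2) graph_symD[OF g, of u ?w] unfolding nbrs_in_def by auto
  then have paths: "path_from_to V E [?w, u] ?w u" "path_from_to V E (rev ?T) ?w ?y"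
    "path_from_to V E ?D ?w ?x"
    using ipath_pair[OF g] ipath_rev[OF T(1)] T(2,3) D(1-3) xyw(6) u TD(2) L(2) ends(1)
    unfolding path_from_to_def by (auto simp: hd_rev last_rev)
  have disj: "set [?w, u] \<inter> set (rev ?T) = {?w}" "set [?w, u] \<inter> set ?D = {?w}"
    "set (rev ?T) \<inter> set ?D = {?w}"
    using TD ends u(2) by auto
  show ?thesis
    unfolding has_pyramid_def
    apply (rule exI[of _ ?w], rule exI[of _ u], rule exI[of _ ?y], rule exI[of _ ?x],
        rule exI[of _ "[?w, u]"], rule exI[of _ "rev ?T"], rule exI[of _ ?D])
    using tri paths disj holes by (intro conjI; simp only:)
qed

lemma pyramid_if_hole_nbrs_single_edge:
  assumes g: "graph V E" and H: "hole E H" "set H \<subseteq> V" and u: "u \<in> V" "u \<notin> set H"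
    and nbrs: "nbrs_in E H u = {a, b, c}" and edges: "E a b" "\<not> E a c" "\<not> E b c"
  shows "has_pyramid V E"
proof -
  have abc: "a \<in> set H" "b \<in> set H" "c \<in> set H"
    using nbrs_in_subset[of E H u] unfolding nbrs by blast+
  obtain L where L: "hole E L" "set L = set H" "L ! 0 = b" "L ! (length L - 1) = a"
    using hole_rotate_to_edge[OF g H(1) abc(1,2) edges(1)] .
  let ?n = "length L"
  have n: "4 \<le> ?n" "L \<noteq> []"
    using hole_length[OF L(1)] by auto
  obtain q where q: "q < ?n" "L ! q = c"
    using abc(3) L(2) by (metis in_set_conv_nth)
  have "c \<noteq> a" "c \<noteq> b"
    using edges graph_symD[OF g, of a b] by blast+
  then have q0: "q \<noteq> 0" "q \<noteq> ?n - 1"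
    using q(2) L(3,4) by metis+
  have "E (L ! 0) (L ! 1)"
    using hole_adj_iff[OF L(1), of 0 1] n by simp
  then have q1: "q \<noteq> 1"
    using q(2) L(3) edges(3) by auto
  have "Suc (?n - 2) = ?n - 1"
    using n by simp
  then have "E (L ! (?n - 2)) (L ! (?n - 1))"
    using hole_adj_iff[OF L(1), of "?n - 2" "?n - 1"] n by simp
  then have q2: "q \<noteq> ?n - 2"
    using q(2) L(4) edges(2) graph_symD[OF g, of c a] by auto
  have "2 \<le> q" "q + 3 \<le> ?n"
    using q(1) q0 q1 q2 by linarith+
  moreover have "nbrs_in E L u = {L ! 0, L ! (?n - 1), L ! q}"
    using nbrs nbrs_in_cong[OF L(2)] L(3,4) q(2) by auto
  moreover have "set L \<subseteq> V" "u \<notin> set L"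
    using L(2) H(2) u(2) by auto
  ultimately show ?thesis
    using pyramid_if_hole_nbrs_edge_and_far[OF g L(1) _ u(1)] by blast
qed

lemma hole_nbrs_card3_stable_or_clone:
  assumes g: "graph V E" and H: "hole E H" "set H \<subseteq> V" and u: "u \<in> V" "u \<notin> set H"
    and card: "card (nbrs_in E H u) = 3" and no_pyramid: "\<not> has_pyramid V E"
  shows "(\<forall>x\<in>nbrs_in E H u. \<forall>y\<in>nbrs_in E H u. \<not> E x y) \<or> (\<exists>y. clone_of E H u y)"
proof (cases "\<forall>x\<in>nbrs_in E H u. \<forall>y\<in>nbrs_in E H u. \<not> E x y")
  case False
  let ?N = "nbrs_in E H u"
  obtain a b where ab: "a \<in> ?N" "b \<in> ?N" "E a b"
    using False by blast
  then have "a \<noteq> b"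
    using graph_irreflD[OF g] by blast
  then have "\<not> ?N \<subseteq> {a, b}"
    using card card_mono[of "{a, b}" ?N] by auto
  then obtain c where c: "c \<in> ?N" "c \<noteq> a" "c \<noteq> b"
    by blast
  have "finite ?N"
    using finite_subset[OF nbrs_in_subset finite_set] .
  then have N: "?N = {a, b, c}"
    using card ab c \<open>a \<noteq> b\<close> by (intro card_subset_eq[symmetric]) auto
  consider "E a c" | "E b c" | "\<not> E a c" "\<not> E b c"
    by blast
  then have "\<exists>y. clone_of E H u y"
  proof cases
    case 1
    then show ?thesis
      using clone_of_if_nbrs_adjacent_pair[OF H(1) u(2) N ab(3)] c(3) by blast
  next
    case 2
    have "?N = {b, a, c}"
      using N by auto
    then show ?thesis
      using clone_of_if_nbrs_adjacent_pair[OF H(1) u(2)] graph_symD[OF g ab(3)] 2 c(2) by blast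
  next
    case 3
    then show ?thesis
      using pyramid_if_hole_nbrs_single_edge[OF g H u N ab(3)] no_pyramid by blast
  qed
  then show ?thesis ..
qed simp

theorem lemma2p6:
  fixes V :: "'a set" and E :: "'a \<Rightarrow> 'a \<Rightarrow> bool" and H :: "'a list" and u v :: 'a
  assumes "in_C V E"
    and "is_hole V E H"
    and "u \<in> V" and "v \<in> V" and "u \<noteq> v"
    and "u \<notin> set H" and "v \<notin> set H"
    and "cross E H u v"
  shows "(\<exists>u' v' u'' v''. distinct [u', v', u'', v''] \<and> cyc_order4 H u' v' u'' v'' \<and>
            u' \<in> nbrs_in E H u \<and> u'' \<in> nbrs_in E H u \<and>
            v' \<in> nbrs_in E H v \<and> v'' \<in> nbrs_in E H v)
       \<or> (nbrs_in E H u = nbrs_in E H v \<and> card (nbrs_in E H u) = 3 \<and>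
            (\<forall>x\<in>nbrs_in E H u. \<forall>y\<in>nbrs_in E H u. \<not> E x y) \<and> E u v)
       \<or> (nbrs_in E H u = nbrs_in E H v \<and>
            (\<exists>y. clone_of E H u y \<and> clone_of E H v y) \<and> E u v)"
proof (cases "alternating_sets H (nbrs_in E H u) (nbrs_in E H v)")
  case True
  then show ?thesis
    unfolding alternating_sets_def by blast
next
  case False
  let ?N = "nbrs_in E H u"
  have g: "graph V E" and no_theta: "\<not> has_theta V E" and no_pyramid: "\<not> has_pyramid V E"
    using assms(1) unfolding in_C_def by auto
  have H: "hole E H" "set H \<subseteq> V"
    using assms(2) unfolding is_hole_def by auto
  have "\<not> nested_sets H ?N (nbrs_in E H v)"
    using assms(8) unfolding cross_def nested_def nested_sets_def by blast
  then have twins: "?N = nbrs_in E H v" and card: "card ?N = 3"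
    using eq_card_3_if_not_nested_not_alternating[OF hole_distinct[OF H(1)] _ nbrs_in_subset
        nbrs_in_subset _ False] hole_length[OF H(1)] by auto
  from hole_nbrs_card3_stable_or_clone[OF g H assms(3,6) card no_pyramid] show ?thesis
  proof
    assume stable: "\<forall>x\<in>?N. \<forall>y\<in>?N. \<not> E x y"
    then have "E u v"
      using theta_if_nonadjacent_stable_twins[OF g H(2) assms(3-5) _ twins card] no_theta by blast
    then show ?thesis
      using twins card stable by blast
  next
    assume "\<exists>y. clone_of E H u y"
    then obtain y where "clone_of E H u y" "clone_of E H v y"
      using twins assms(7) unfolding clone_of_def by auto
    moreover from this have "E u v"
      using theta_if_nonadjacent_clones[OF g H assms(3-5)] no_theta by blast
    ultimately show ?thesis
      using twins by blast
  qed
qed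

end
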